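(* Let $\texttt{ALG}$ be an online non-preemptive scheduler for the serial-parallel scheduling problem on $p$ processors, fix a constant $c>0$, and let $R\in\mathbb{N}$. Then there exists a task arrival process $\mathcal{T}$ on which the competitive ratio of $\texttt{ALG}$ with $c$ speed augmentation for mean response time is $\Omega(R)$, i.e., $\mathrm{TRT}^{\mathcal{T}}_{\texttt{ALG}}\ge\Omega(R)\cdot\mathrm{TRT}^{c\cdot\mathcal{T}}_{\texttt{OPT}}$. In particular $\texttt{ALG}$ can perform arbitrarily worse than $\texttt{OPT}$.
   Context: Serial-parallel scheduling problem: $p$ identical processors. A task arrival process is a finite set of tasks $\tau_i=(\sigma_i,\pi_i,t_i)$, $i=1,\dots,n$, with arrival time $t_i\ge0$, serial work $\sigma_i\ge0$ and parallel work $\pi_i$, with $1\le\pi_i/\sigma_i\le p$ when $\sigma_i>0$. A task is performed either by its serial job (work $\sigma_i$, at most one processor at any instant) or by its parallel job (work $\pi_i$, any number of processors, rate equal to number of processors); time is continuous. A scheduler is non-preemptive if the number of processors it assigns to each task is fixed for the full duration during which the task executes. Total response time $\mathrm{TRT}=\sum_i(f_i-t_i)$ with $f_i$ the completion time; mean response time is $\mathrm{TRT}/n$. $\mathrm{TRT}^{\mathcal{T}}_{\texttt{OPT}}$ is the optimal offline (preemptive) total response time. For $c>0$, $c\cdot\mathcal{T}$ is $\mathcal{T}$ with all works multiplied by $c$; comparing $\mathrm{TRT}_{\texttt{ALG}}^{\mathcal{T}}$ with $\mathrm{TRT}_{\texttt{OPT}}^{c\cdot\mathcal{T}}$ means $\texttt{ALG}$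 has $c$ speed augmentation. Competitive ratio here is worst-case. *)

theory Defs
  imports "HOL-Analysis.Analysis"
begin

type_synonym task = "real \<times> real \<times> real"

definition ser :: "task \<Rightarrow> real" where "ser \<tau> = fst \<tau>"
definition par :: "task \<Rightarrow> real" where "par \<tau> = fst (snd \<tau>)"
definition arr :: "task \<Rightarrow> real" where "arr \<tau> = snd (snd \<tau>)"

definition valid_task :: "nat \<Rightarrow> task \<Rightarrow> bool" where
  "valid_task p \<tau> \<longleftrightarrow> arr \<tau> \<ge> 0 \<and> ser \<tau> \<ge> 0 \<and> par \<tau> \<ge> 0 \<and>
     (ser \<tau> > 0 \<longrightarrow> 1 \<le> par \<tau> / ser \<tau> \<and> par \<tau> / ser \<tau> \<le> real p)"

definition valid_instance :: "nat \<Rightarrow> task list \<Rightarrow> bool" where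
  "valid_instance p T \<longleftrightarrow> (\<forall>\<tau>\<in>set T. valid_task p \<tau>)"

definition scale :: "real \<Rightarrow> task list \<Rightarrow> task list" where
  "scale c T = map (\<lambda>(s, q, t). (c * s, c * q, t)) T"

definition work :: "task \<Rightarrow> bool \<Rightarrow> real" where
  "work \<tau> b = (if b then par \<tau> else ser \<tau>)"

text \<open>A (general, possibly preemptive) schedule: job choice m, processor
  allocation a i t (number of processors given to task i at time t),
  and completion times f.\<close>
definition feasible_sched ::
  "nat \<Rightarrow> task list \<Rightarrow> (nat \<Rightarrow> bool) \<Rightarrow> (nat \<Rightarrow> real \<Rightarrow> nat) \<Rightarrow> (nat \<Rightarrow> real) \<Rightarrow> bool" where
  "feasible_sched p T m a f \<longleftrightarrow>
     (\<forall>i<length T.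
        arr (T!i) \<le> f i \<and>
        (\<forall>t. a i t > 0 \<longrightarrow> arr (T!i) \<le> t \<and> t < f i) \<and>
        (\<not> m i \<longrightarrow> (\<forall>t. a i t \<le> 1)) \<and>
        ((\<lambda>t. real (a i t)) has_integral work (T!i) (m i)) {arr (T!i)..f i}) \<and>
     (\<forall>t. (\<Sum>i<length T. a i t) \<le> p)"

definition TRT :: "task list \<Rightarrow> (nat \<Rightarrow> real) \<Rightarrow> real" where
  "TRT T f = (\<Sum>i<length T. f i - arr (T!i))"

definition TRT_OPT :: "nat \<Rightarrow> task list \<Rightarrow> real" where
  "TRT_OPT p T = Inf {TRT T f | m a f. feasible_sched p T m a f}"

text \<open>A non-preemptive schedule assigns to each task a decision
  (parallel job?, number of processors k, start time s); the task then runs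
  on exactly k processors during [s, s + work/k).\<close>
type_synonym np_sched = "nat \<Rightarrow> bool \<times> nat \<times> real"

definition np_par :: "bool \<times> nat \<times> real \<Rightarrow> bool" where "np_par d = fst d"
definition np_procs :: "bool \<times> nat \<times> real \<Rightarrow> nat" where "np_procs d = fst (snd d)"
definition np_start :: "bool \<times> nat \<times> real \<Rightarrow> real" where "np_start d = snd (snd d)"

definition np_finish :: "task list \<Rightarrow> np_sched \<Rightarrow> nat \<Rightarrow> real" where
  "np_finish T d i = np_start (d i) + work (T!i) (np_par (d i)) / real (np_procs (d i))"

definition np_alloc :: "task list \<Rightarrow> np_sched \<Rightarrow> nat \<Rightarrow> real \<Rightarrow> nat" where
  "np_alloc T d i t =
     (if np_start (d i) \<le> t \<and> t < np_finish T d i then np_procs (d i) else 0)"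

definition feasible_np :: "nat \<Rightarrow> task list \<Rightarrow> np_sched \<Rightarrow> bool" where
  "feasible_np p T d \<longleftrightarrow>
     (\<forall>i<length T.
        arr (T!i) \<le> np_start (d i) \<and>
        1 \<le> np_procs (d i) \<and>
        (\<not> np_par (d i) \<longrightarrow> np_procs (d i) = 1)) \<and>
     (\<forall>t. (\<Sum>i<length T. np_alloc T d i t) \<le> p)"

definition TRT_np :: "task list \<Rightarrow> np_sched \<Rightarrow> real" where
  "TRT_np T d = TRT T (np_finish T d)"

definition arrived :: "task list \<Rightarrow> real \<Rightarrow> nat set" where
  "arrived T t = {i. i < length T \<and> arr (T!i) \<le> t}"

text \<open>Online: any decision that takes effect by time t (the task has started by t)
  depends only on the tasks that have arrived by time t.\<close>
definition online :: "nat \<Rightarrow> (task list \<Rightarrow> np_sched) \<Rightarrow> bool" where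
  "online p ALG \<longleftrightarrow>
     (\<forall>T T' t. valid_instance p T \<longrightarrow> valid_instance p T' \<longrightarrow>
        arrived T t = arrived T' t \<longrightarrow>
        (\<forall>i\<in>arrived T t. T'!i = T!i) \<longrightarrow>
        (\<forall>i\<in>arrived T t. (np_start (ALG T i) \<le> t \<or> np_start (ALG T' i) \<le> t)
             \<longrightarrow> ALG T' i = ALG T i))"

definition online_np_scheduler :: "nat \<Rightarrow> (task list \<Rightarrow> np_sched) \<Rightarrow> bool" where
  "online_np_scheduler p ALG \<longleftrightarrow>
     online p ALG \<and> (\<forall>T. valid_instance p T \<longrightarrow> feasible_np p T (ALG T))"

end

theory Submission
  imports Defs
begin

text \<open>Let \<open>t\<^sub>0\<close> be a moment at which \<open>ALG\<close>, over all valid instances, keeps the largest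
  number of processors busy; this maximum exists because the load is an integer between 0 and
  \<open>p\<close>. Append to that instance a burst of \<open>N\<close> equal tasks arriving shortly after \<open>t\<^sub>0\<close>.
  Being online, \<open>ALG\<close> keeps the tasks running at \<open>t\<^sub>0\<close> exactly as before, and being
  non-preemptive it cannot start a burst task while all of them still run, as that would exceed
  the maximal load. So every burst task waits a fixed time and \<open>ALG\<close> pays order \<open>N\<close>.
  If each burst task has work \<open>1/N\<^sup>2\<close>, the offline optimum on the scaled instance serves
  the burst first, one task after the other, at cost \<open>O(1)\<close>, and then the original tasks
  at a cost independent of \<open>N\<close>.\<close>

lemma scale_append: "scale c (xs @ ys) = scale c xs @ scale c ys"
  by (simp add: scale_def)

lemma scale_replicate: "scale c (replicate n (s, q, t)) = replicate n (c * s, c * q, t)"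
  by (simp add: scale_def)

lemma valid_task_scale:
  assumes "valid_task p (s, q, t)" "0 < c"
  shows "valid_task p (c * s, c * q, t)"
  using assms by (auto simp: valid_task_def ser_def par_def arr_def zero_less_mult_iff)

lemma valid_instance_scale:
  assumes "valid_instance p T" "0 < c"
  shows "valid_instance p (scale c T)"
  using assms by (auto simp: valid_instance_def scale_def intro: valid_task_scale)

lemma ser_le_work: "valid_task p \<tau> \<Longrightarrow> ser \<tau> \<le> work \<tau> b"
  by (cases "ser \<tau> > 0") (auto simp: valid_task_def work_def le_divide_eq)

lemma work_nonneg: "valid_task p \<tau> \<Longrightarrow> 0 \<le> work \<tau> b"
  by (meson order_trans ser_le_work valid_task_def)

lemma np_start_le_finish:
  assumes "valid_task p (T!i)" "1 \<le> np_procs (d i)"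
  shows "np_start (d i) \<le> np_finish T d i"
  using assms work_nonneg by (simp add: np_finish_def)

lemma has_integral_const_on_subinterval:
  fixes A s F k :: real
  assumes "A \<le> s" "s \<le> F"
  shows "((\<lambda>t. if s \<le> t \<and> t < F then k else 0) has_integral k * (F - s)) {A..F}"
proof -
  have "((\<lambda>t. k) has_integral k * (F - s)) (cbox s F)"
    using has_integral_const_real[of k s F] assms by (simp add: mult.commute)
  then have "((\<lambda>t. if t \<in> cbox s F then k else 0) has_integral k * (F - s)) (cbox A F)"
    by (rule has_integral_restrict_closed_subinterval) (use assms in auto)
  then have "((\<lambda>t. if t \<in> {s..F} then k else 0) has_integral k * (F - s)) {A..F}"
    by simp
  then show ?thesis
    by (rule has_integral_spike_finite_eq[of "{F}", THEN iffD1, rotated 2]) auto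
qed

lemma feasible_np_imp_feasible_sched:
  assumes valid: "valid_instance p T" and feasible: "feasible_np p T d"
  shows "feasible_sched p T (\<lambda>i. np_par (d i)) (np_alloc T d) (np_finish T d)"
proof -
  have "arr (T!i) \<le> np_finish T d i \<and>
      (\<forall>t. 0 < np_alloc T d i t \<longrightarrow> arr (T!i) \<le> t \<and> t < np_finish T d i) \<and>
      (\<not> np_par (d i) \<longrightarrow> (\<forall>t. np_alloc T d i t \<le> 1)) \<and>
      ((\<lambda>t. real (np_alloc T d i t)) has_integral work (T!i) (np_par (d i))) {arr (T!i)..np_finish T d i}"
    if i: "i < length T" for i
  proof -
    have arr_start: "arr (T!i) \<le> np_start (d i)" and procs: "1 \<le> np_procs (d i)"
      and serial: "\<not> np_par (d i) \<longrightarrow> np_procs (d i) = 1"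
      using feasible i by (auto simp: feasible_np_def)
    have start_finish: "np_start (d i) \<le> np_finish T d i"
      using valid i procs by (intro np_start_le_finish) (auto simp: valid_instance_def)
    have "real (np_procs (d i)) * (np_finish T d i - np_start (d i)) = work (T!i) (np_par (d i))"
      using procs by (simp add: np_finish_def)
    moreover have "(\<lambda>t. real (np_alloc T d i t)) =
        (\<lambda>t. if np_start (d i) \<le> t \<and> t < np_finish T d i then real (np_procs (d i)) else 0)"
      by (simp add: fun_eq_iff np_alloc_def)
    ultimately have "((\<lambda>t. real (np_alloc T d i t)) has_integral work (T!i) (np_par (d i)))
        {arr (T!i)..np_finish T d i}"
      using has_integral_const_on_subinterval[OF arr_start start_finish] by metis
    then show ?thesis
      using arr_start start_finish serial by (auto simp: np_alloc_def)
  qed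
  moreover have "\<forall>t. (\<Sum>i<length T. np_alloc T d i t) \<le> p"
    using feasible by (simp add: feasible_np_def)
  ultimately show ?thesis
    unfolding feasible_sched_def by (intro conjI allI impI) simp_all
qed

lemma response_nonneg: "feasible_sched p T m a f \<Longrightarrow> i < length T \<Longrightarrow> 0 \<le> f i - arr (T!i)"
  by (simp add: feasible_sched_def)

lemma TRT_nonneg: "feasible_sched p T m a f \<Longrightarrow> 0 \<le> TRT T f"
  unfolding TRT_def by (intro sum_nonneg) (simp add: feasible_sched_def)

lemma response_le_TRT:
  "feasible_sched p T m a f \<Longrightarrow> i < length T \<Longrightarrow> f i - arr (T!i) \<le> TRT T f"
  unfolding TRT_def by (intro member_le_sum) (auto simp: feasible_sched_def)

lemma work_le_response:
  assumes feasible: "feasible_sched p T m a f" and i: "i < length T"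
  shows "work (T!i) (m i) \<le> real p * (f i - arr (T!i))"
proof -
  have "arr (T!i) \<le> f i"
    and work: "((\<lambda>t. real (a i t)) has_integral work (T!i) (m i)) {arr (T!i)..f i}"
    using feasible i by (auto simp: feasible_sched_def)
  then have const: "((\<lambda>t. real p) has_integral real p * (f i - arr (T!i))) {arr (T!i)..f i}"
    using has_integral_const_real[of "real p" "arr (T!i)" "f i"] by (simp add: mult.commute)
  have "a i t \<le> p" for t
  proof -
    have "a i t \<le> (\<Sum>j<length T. a j t)" using i by (intro member_le_sum) auto
    also have "\<dots> \<le> p" using feasible by (simp add: feasible_sched_def)
    finally show ?thesis .
  qed
  then show ?thesis
    using has_integral_le[OF work const] by simp
qed

lemma TRT_OPT_le:
  assumes "feasible_sched p T m a f"
  shows "TRT_OPT p T \<le> TRT T f"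
  unfolding TRT_OPT_def
proof (rule cInf_lower)
  show "TRT T f \<in> {TRT T f | m a f. feasible_sched p T m a f}" using assms by blast
  show "bdd_below {TRT T f | m a f. feasible_sched p T m a f}"
    by (rule bdd_belowI[of _ 0]) (auto simp: TRT_nonneg)
qed

lemma ser_div_le_TRT_OPT:
  assumes "feasible_sched p T m a f" "valid_instance p T" "i < length T"
  shows "ser (T!i) / real p \<le> TRT_OPT p T"
  unfolding TRT_OPT_def
proof (rule cInf_greatest)
  show "{TRT T f | m a f. feasible_sched p T m a f} \<noteq> {}" using assms(1) by blast
  fix x assume "x \<in> {TRT T f | m a f. feasible_sched p T m a f}"
  then obtain m' a' f' where x: "x = TRT T f'" and feasible: "feasible_sched p T m' a' f'"
    by blast
  have "ser (T!i) \<le> real p * (f' i - arr (T!i))"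
    using assms(2,3) ser_le_work work_le_response[OF feasible assms(3)]
    by (meson nth_mem order_trans valid_instance_def)
  then have "ser (T!i) / real p \<le> f' i - arr (T!i)"
    using response_nonneg[OF feasible assms(3)] by (cases "p = 0") (auto simp: divide_le_eq mult.commute)
  also have "\<dots> \<le> x" using response_le_TRT[OF feasible assms(3)] x by simp
  finally show "ser (T!i) / real p \<le> x" .
qed

definition serial_sched :: "(nat \<Rightarrow> real) \<Rightarrow> np_sched" where
  "serial_sched st i = (False, 1, st i)"

lemma np_finish_serial_sched [simp]: "np_finish T (serial_sched st) i = st i + ser (T!i)"
  by (simp add: np_finish_def serial_sched_def np_start_def np_par_def np_procs_def work_def)

lemma feasible_np_serial_sched:
  assumes "1 \<le> p"
    and arrival: "\<And>i. i < length T \<Longrightarrow> arr (T!i) \<le> st i"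
    and disjoint: "\<And>i j. i < j \<Longrightarrow> j < length T \<Longrightarrow>
      st i + ser (T!i) \<le> st j \<or> st j + ser (T!j) \<le> st i"
  shows "feasible_np p T (serial_sched st)"
proof -
  have "(\<Sum>i<length T. np_alloc T (serial_sched st) i t) \<le> 1" for t
  proof -
    let ?A = "{i. i < length T \<and> st i \<le> t \<and> t < st i + ser (T!i)}"
    have "(\<Sum>i<length T. np_alloc T (serial_sched st) i t) = card ?A"
      by (simp add: np_alloc_def serial_sched_def np_start_def np_procs_def sum.If_cases Int_def)
    also have "card ?A \<le> Suc 0"
    proof (subst card_le_Suc0_iff_eq)
      show "\<forall>i\<in>?A. \<forall>j\<in>?A. i = j"
        using disjoint by (smt (verit) linorder_neqE_nat mem_Collect_eq)
    qed simp
    finally show ?thesis by simp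
  qed
  then show ?thesis
    using assms(1) arrival unfolding feasible_np_def
    by (auto simp: serial_sched_def np_start_def np_procs_def np_par_def intro: order_trans)
qed

definition np_load :: "task list \<Rightarrow> np_sched \<Rightarrow> real \<Rightarrow> nat" where
  "np_load T d t = (\<Sum>i<length T. np_alloc T d i t)"

lemma max_load_exists:
  assumes "\<And>T. valid_instance p T \<Longrightarrow> feasible_np p T (ALG T)"
  obtains T0 t0 where "valid_instance p T0" "0 \<le> t0"
    "\<And>T t. valid_instance p T \<Longrightarrow> 0 \<le> t \<Longrightarrow> np_load T (ALG T) t \<le> np_load T0 (ALG T0) t0"
proof -
  let ?P = "\<lambda>(T, t). valid_instance p T \<and> 0 \<le> (t::real)"
  let ?load = "\<lambda>(T, t). np_load T (ALG T) t"
  have "?P ([], 0)" by (simp add: valid_instance_def)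
  moreover have "\<forall>x. ?P x \<longrightarrow> ?load x < Suc p"
    using assms by (auto simp: np_load_def feasible_np_def less_Suc_eq_le)
  ultimately obtain x where "?P x" and greatest: "\<forall>y. ?P y \<longrightarrow> ?load y \<le> ?load x"
    using ex_has_greatest_nat[of ?P _ ?load] by blast
  obtain T0 t0 where x: "x = (T0, t0)"
    by (cases x)
  show ?thesis
  proof (rule that)
    show "valid_instance p T0" "0 \<le> t0"
      using \<open>?P x\<close> x by auto
    fix T and t :: real
    assume "valid_instance p T" "0 \<le> t"
    then show "np_load T (ALG T) t \<le> np_load T0 (ALG T0) t0"
      using greatest[rule_format, of "(T, t)"] x by simp
  qed
qed

lemma online_append_keeps_started:
  assumes "online p ALG" "valid_instance p T" "valid_instance p (T @ U)"
    and late: "\<forall>\<tau>\<in>set U. t < arr \<tau>"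
    and "i < length T" "arr (T!i) \<le> t" "np_start (ALG T i) \<le> t"
  shows "ALG (T @ U) i = ALG T i"
proof -
  have "t < arr ((T @ U)!j)" if "length T \<le> j" "j < length (T @ U)" for j
  proof -
    have "(T @ U)!j \<in> set U"
      using that by (simp add: nth_append)
    then show ?thesis using late by blast
  qed
  then have "arrived (T @ U) t = arrived T t"
    unfolding arrived_def by (metis (lifting) leD linorder_le_less_linear nth_append_left
        length_append trans_less_add1)
  moreover have "\<forall>j\<in>arrived T t. (T @ U)!j = T!j"
    by (simp add: arrived_def nth_append)
  moreover have "i \<in> arrived T t"
    using assms(5,6) by (simp add: arrived_def)
  ultimately show ?thesis
    using assms(1-3,7) unfolding online_def by metis
qed

lemma np_alloc_append:
  "i < length T \<Longrightarrow> d' i = d i \<Longrightarrow> np_alloc (T @ U) d' i t = np_alloc T d i t"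
  by (simp add: np_alloc_def np_finish_def nth_append)

lemma online_append_keeps_running:
  assumes sched: "online_np_scheduler p ALG"
    and T0: "valid_instance p T0" and T: "valid_instance p (T0 @ U)"
    and late: "\<forall>\<tau>\<in>set U. t0 < arr \<tau>"
    and i: "i < length T0" and running: "0 < np_alloc T0 (ALG T0) i t0"
    and s: "t0 \<le> s" "s < np_finish T0 (ALG T0) i"
  shows "np_alloc (T0 @ U) (ALG (T0 @ U)) i s = np_alloc T0 (ALG T0) i t0"
proof -
  have started: "np_start (ALG T0 i) \<le> t0" and "t0 < np_finish T0 (ALG T0) i"
    using running by (auto simp: np_alloc_def split: if_splits)
  have "arr (T0!i) \<le> np_start (ALG T0 i)"
    using sched T0 i unfolding online_np_scheduler_def feasible_np_def by blast
  then have arrived: "arr (T0!i) \<le> t0"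
    using started by linarith
  have online: "online p ALG"
    using sched by (simp add: online_np_scheduler_def)
  have "ALG (T0 @ U) i = ALG T0 i"
    using online_append_keeps_started[OF online T0 T late i arrived started] .
  then show ?thesis
    using i started s \<open>t0 < np_finish T0 (ALG T0) i\<close>
    by (simp add: np_alloc_append) (simp add: np_alloc_def)
qed

lemma appended_task_waits_for_running_task:
  assumes sched: "online_np_scheduler p ALG"
    and T0: "valid_instance p T0" and T: "valid_instance p (T0 @ U)"
    and U: "\<forall>\<tau>\<in>set U. t0 < arr \<tau> \<and> 0 < ser \<tau>"
    and max_load: "\<And>T t. valid_instance p T \<Longrightarrow> 0 \<le> t \<Longrightarrow>
      np_load T (ALG T) t \<le> np_load T0 (ALG T0) t0"
    and q: "length T0 \<le> q" "q < length (T0 @ U)"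
  shows "\<exists>i<length T0. 0 < np_alloc T0 (ALG T0) i t0 \<and>
    np_finish T0 (ALG T0) i \<le> np_start (ALG (T0 @ U) q)"
proof (rule ccontr)
  let ?T = "T0 @ U" and ?s = "np_start (ALG (T0 @ U) q)"
  let ?R = "{i. i < length T0 \<and> 0 < np_alloc T0 (ALG T0) i t0}"
  assume "\<not> ?thesis"
  then have still_running: "?s < np_finish T0 (ALG T0) i" if "i \<in> ?R" for i
    using that by auto
  have feasible: "\<And>T. valid_instance p T \<Longrightarrow> feasible_np p T (ALG T)"
    using sched by (simp add: online_np_scheduler_def)
  have q_in_U: "?T!q \<in> set U"
    using q by (simp add: nth_append)
  have arr_q: "arr (?T!q) \<le> ?s" and procs_q: "1 \<le> np_procs (ALG ?T q)"
    using feasible[OF T] q by (auto simp: feasible_np_def)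
  have valid_q: "valid_task p (?T!q)"
    using T q nth_mem unfolding valid_instance_def by blast
  have "t0 < arr (?T!q)" and ser_q: "0 < ser (?T!q)"
    using U q_in_U by auto
  then have "t0 < ?s" and "0 \<le> ?s"
    using arr_q valid_q by (auto simp: valid_task_def)
  have "0 < work (?T!q) (np_par (ALG ?T q))"
    using ser_q ser_le_work[OF valid_q] by (rule less_le_trans)
  have alloc_q: "np_alloc ?T (ALG ?T) q ?s = np_procs (ALG ?T q)"
    using procs_q \<open>0 < work (?T!q) _\<close> by (simp add: np_alloc_def np_finish_def)
  have alloc_R: "np_alloc ?T (ALG ?T) i ?s = np_alloc T0 (ALG T0) i t0" if "i \<in> ?R" for i
    using online_append_keeps_running[OF sched T0 T _ _ _ _ still_running[OF that]] U that \<open>t0 < ?s\<close>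
    by auto
  have "np_load T0 (ALG T0) t0 = (\<Sum>i\<in>?R. np_alloc T0 (ALG T0) i t0)"
    unfolding np_load_def by (rule sum.mono_neutral_right) auto
  also have "\<dots> = (\<Sum>i\<in>?R. np_alloc ?T (ALG ?T) i ?s)"
    using alloc_R by simp
  also have "\<dots> < (\<Sum>i\<in>insert q ?R. np_alloc ?T (ALG ?T) i ?s)"
    using q procs_q alloc_q by simp
  also have "\<dots> \<le> np_load ?T (ALG ?T) ?s"
    unfolding np_load_def by (rule sum_mono2) (use q in auto)
  also have "\<dots> \<le> np_load T0 (ALG T0) t0"
    using max_load[OF T \<open>0 \<le> ?s\<close>] .
  finally show False by simp
qed

lemma online_start_delay:
  assumes sched: "online_np_scheduler p ALG" and T0: "valid_instance p T0"
    and max_load: "\<And>T t. valid_instance p T \<Longrightarrow> 0 \<le> t \<Longrightarrow>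
      np_load T (ALG T) t \<le> np_load T0 (ALG T0) t0"
  obtains d where "0 < d"
    "\<And>U q. valid_instance p (T0 @ U) \<Longrightarrow> \<forall>\<tau>\<in>set U. t0 < arr \<tau> \<and> 0 < ser \<tau> \<Longrightarrow>
      length T0 \<le> q \<Longrightarrow> q < length (T0 @ U) \<Longrightarrow> t0 + d \<le> np_start (ALG (T0 @ U) q)"
proof -
  let ?R = "{i. i < length T0 \<and> 0 < np_alloc T0 (ALG T0) i t0}"
  define d where "d = Min ((\<lambda>i. np_finish T0 (ALG T0) i - t0) ` ?R \<union> {1})"
  have "t0 < np_finish T0 (ALG T0) i" if "i \<in> ?R" for i
    using that by (auto simp: np_alloc_def split: if_splits)
  then have "0 < d"
    unfolding d_def by (subst Min_gr_iff) auto
  have finite: "finite ((\<lambda>i. np_finish T0 (ALG T0) i - t0) ` ?R \<union> {1})"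
    by simp
  have d_le: "t0 + d \<le> np_finish T0 (ALG T0) i" if "i \<in> ?R" for i
  proof -
    have "d \<le> np_finish T0 (ALG T0) i - t0"
      unfolding d_def by (rule Min_le[OF finite]) (use that in blast)
    then show ?thesis by simp
  qed
  show ?thesis
  proof (rule that[OF \<open>0 < d\<close>])
    fix U q
    assume "valid_instance p (T0 @ U)" "\<forall>\<tau>\<in>set U. t0 < arr \<tau> \<and> 0 < ser \<tau>"
      "length T0 \<le> q" "q < length (T0 @ U)"
    then obtain i where "i \<in> ?R" "np_finish T0 (ALG T0) i \<le> np_start (ALG (T0 @ U) q)"
      using appended_task_waits_for_running_task[OF sched T0 _ _ max_load] by blast
    then show "t0 + d \<le> np_start (ALG (T0 @ U) q)"
      using d_le by force
  qed
qed

lemma valid_instance_append_replicate: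
  assumes "valid_instance p T" "1 \<le> p" "0 \<le> a" "0 < w"
  shows "valid_instance p (T @ replicate N (w, w, a))"
  using assms by (auto simp: valid_instance_def valid_task_def ser_def par_def arr_def)

lemma TRT_np_append_replicate_ge:
  assumes valid: "valid_instance p (T @ replicate N \<tau>)"
    and feasible: "feasible_np p (T @ replicate N \<tau>) d"
    and start: "\<And>q. length T \<le> q \<Longrightarrow> q < length T + N \<Longrightarrow> s \<le> np_start (d q)"
  shows "real N * (s - arr \<tau>) \<le> TRT_np (T @ replicate N \<tau>) d"
proof -
  let ?T = "T @ replicate N \<tau>"
  have response: "np_start (d i) - arr (?T!i) \<le> np_finish ?T d i - arr (?T!i)"
    if "i < length ?T" for i
  proof -
    have "valid_task p (?T!i)"
      using valid that nth_mem unfolding valid_instance_def by blast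
    moreover have "1 \<le> np_procs (d i)"
      using feasible that unfolding feasible_np_def by blast
    ultimately show ?thesis
      using np_start_le_finish by simp
  qed
  have "real N * (s - arr \<tau>) = real (card {length T..<length ?T}) * (s - arr \<tau>)"
    by simp
  also have "\<dots> \<le> (\<Sum>i\<in>{length T..<length ?T}. np_finish ?T d i - arr (?T!i))"
  proof (rule sum_bounded_below)
    fix i assume i: "i \<in> {length T..<length ?T}"
    then have "?T!i = \<tau>"
      by (auto simp: nth_append)
    then show "s - arr \<tau> \<le> np_finish ?T d i - arr (?T!i)"
      using start[of i] response[of i] i by auto
  qed
  also have "\<dots> \<le> TRT_np ?T d"
    unfolding TRT_np_def TRT_def
  proof (rule sum_mono2)
    fix i assume "i \<in> {..<length ?T} - {length T..<length ?T}"
    then have i: "i < length ?T" by simp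
    then have "arr (?T!i) \<le> np_start (d i)"
      using feasible unfolding feasible_np_def by blast
    then show "0 \<le> np_finish ?T d i - arr (?T!i)"
      using response[OF i] by linarith
  qed auto
  finally show ?thesis .
qed

lemma online_burst_cost:
  assumes "1 \<le> p" and sched: "online_np_scheduler p ALG"
  obtains T0 a D where "valid_instance p T0" "0 \<le> a" "0 < D"
    "\<And>N w. 0 < w \<Longrightarrow>
      real N * D \<le> TRT_np (T0 @ replicate N (w, w, a)) (ALG (T0 @ replicate N (w, w, a)))"
proof -
  have feasible: "\<And>T. valid_instance p T \<Longrightarrow> feasible_np p T (ALG T)"
    using sched by (simp add: online_np_scheduler_def)
  obtain T0 t0 where T0: "valid_instance p T0" "0 \<le> t0" and max_load: "\<And>T t.
      valid_instance p T \<Longrightarrow> 0 \<le> t \<Longrightarrow> np_load T (ALG T) t \<le> np_load T0 (ALG T0) t0"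
    using max_load_exists[OF feasible] by blast
  obtain d where "0 < d" and delay: "\<And>U q. valid_instance p (T0 @ U) \<Longrightarrow>
      \<forall>\<tau>\<in>set U. t0 < arr \<tau> \<and> 0 < ser \<tau> \<Longrightarrow> length T0 \<le> q \<Longrightarrow> q < length (T0 @ U) \<Longrightarrow>
      t0 + d \<le> np_start (ALG (T0 @ U) q)"
    using online_start_delay[OF sched T0(1) max_load] by blast
  show ?thesis
  proof (rule that[OF T0(1), of "t0 + d / 2" "d / 2"])
    show "0 \<le> t0 + d / 2" "0 < d / 2"
      using T0(2) \<open>0 < d\<close> by auto
    fix N :: nat and w :: real
    assume "0 < w"
    let ?T = "T0 @ replicate N (w, w, t0 + d / 2)"
    have valid: "valid_instance p ?T"
      using valid_instance_append_replicate[OF T0(1) assms(1)] \<open>0 < w\<close> T0(2) \<open>0 < d\<close> by simp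
    have "\<forall>\<tau>\<in>set (replicate N (w, w, t0 + d / 2)). t0 < arr \<tau> \<and> 0 < ser \<tau>"
      using \<open>0 < d\<close> \<open>0 < w\<close> by (simp add: arr_def ser_def)
    then have "t0 + d \<le> np_start (ALG ?T q)" if "length T0 \<le> q" "q < length T0 + N" for q
      using delay[OF valid] that by simp
    then have "real N * (t0 + d - arr (w, w, t0 + d / 2)) \<le> TRT_np ?T (ALG ?T)"
      by (rule TRT_np_append_replicate_ge[OF valid feasible[OF valid]])
    then show "real N * (d / 2) \<le> TRT_np ?T (ALG ?T)"
      by (simp add: arr_def)
  qed
qed

definition burst_first :: "task list \<Rightarrow> real \<Rightarrow> real \<Rightarrow> real \<Rightarrow> nat \<Rightarrow> real" where
  "burst_first S B h a i =
     (if i < length S then B + (\<Sum>k<i. ser (S!k)) else a + real (i - length S) * h)"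

lemma burst_first_finish:
  shows "i < length S \<Longrightarrow>
      burst_first S B h a i + ser ((S @ replicate N (h, h, a))!i) = B + (\<Sum>k\<le>i. ser (S!k))"
    and "length S \<le> i \<Longrightarrow> i < length S + N \<Longrightarrow>
      burst_first S B h a i + ser ((S @ replicate N (h, h, a))!i) = a + real (Suc (i - length S)) * h"
  by (simp_all add: burst_first_def nth_append ser_def algebra_simps flip: lessThan_Suc_atMost)

lemma feasible_np_burst_first:
  assumes p: "1 \<le> p" and S: "valid_instance p S" and h: "0 < h"
    and burst_before_B: "a + real N * h \<le> B" and arr_le_B: "\<And>i. i < length S \<Longrightarrow> arr (S!i) \<le> B"
  shows "feasible_np p (S @ replicate N (h, h, a)) (serial_sched (burst_first S B h a))"
proof -
  let ?n = "length S" and ?T = "S @ replicate N (h, h, a)" and ?st = "burst_first S B h a"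
  have ser_nonneg: "0 \<le> ser (S!k)" if "k < ?n" for k
    using S that by (simp add: valid_instance_def valid_task_def)
  have prefix_nonneg: "0 \<le> (\<Sum>k<i. ser (S!k))" if "i \<le> ?n" for i
    using that ser_nonneg by (intro sum_nonneg) simp
  have prefix_mono: "(\<Sum>k\<le>i. ser (S!k)) \<le> (\<Sum>k<j. ser (S!k))" if "i < j" "j \<le> ?n" for i j
    using that ser_nonneg by (intro sum_mono2) auto
  show ?thesis
  proof (rule feasible_np_serial_sched[OF p])
    fix i assume "i < length ?T"
    then show "arr (?T!i) \<le> ?st i"
      using arr_le_B prefix_nonneg h
      by (cases "i < ?n") (auto simp: burst_first_def nth_append arr_def intro: add_increasing2)
  next
    fix i j assume ij: "i < j" "j < length ?T"
    consider "j < ?n" | "i < ?n" "?n \<le> j" | "?n \<le> i"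
      by linarith
    then show "?st i + ser (?T!i) \<le> ?st j \<or> ?st j + ser (?T!j) \<le> ?st i"
    proof cases
      case 1
      then show ?thesis
        using ij burst_first_finish(1) prefix_mono[of i j] by (simp add: burst_first_def)
    next
      case 2
      have "real (Suc (j - ?n)) * h \<le> real N * h"
        using 2 ij h by (intro mult_right_mono) auto
      then have "?st j + ser (?T!j) \<le> B"
        using 2 ij burst_first_finish(2)[where i = j] burst_before_B by simp
      also have "B \<le> ?st i"
        using 2 prefix_nonneg[of i] by (simp add: burst_first_def)
      finally show ?thesis by simp
    next
      case 3
      have "real (Suc (i - ?n)) * h \<le> real (j - ?n) * h"
        using 3 ij h by (intro mult_right_mono) auto
      then show ?thesis
        using 3 ij burst_first_finish(2)[where i = i] by (simp add: burst_first_def)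
    qed
  qed
qed

lemma TRT_np_burst_first_le:
  assumes "0 \<le> h"
  shows "TRT_np (S @ replicate N (h, h, a)) (serial_sched (burst_first S B h a)) \<le>
    (\<Sum>i<length S. B + (\<Sum>k\<le>i. ser (S!k)) - arr (S!i)) + real N * (real N * h)"
proof -
  let ?n = "length S" and ?T = "S @ replicate N (h, h, a)" and ?st = "burst_first S B h a"
  have "TRT_np ?T (serial_sched ?st) = (\<Sum>i<?n. ?st i + ser (?T!i) - arr (?T!i)) +
      (\<Sum>i=?n..<?n+N. ?st i + ser (?T!i) - arr (?T!i))"
    unfolding TRT_np_def TRT_def by (simp add: sum.atLeastLessThan_concat lessThan_atLeast0)
  also have "(\<Sum>i<?n. ?st i + ser (?T!i) - arr (?T!i)) =
      (\<Sum>i<?n. B + (\<Sum>k\<le>i. ser (S!k)) - arr (S!i))"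
    using burst_first_finish(1)[where N = N and h = h and a = a]
    by (intro sum.cong) (simp_all add: nth_append)
  finally have split: "TRT_np ?T (serial_sched ?st) = (\<Sum>i<?n. B + (\<Sum>k\<le>i. ser (S!k)) - arr (S!i))
      + (\<Sum>i=?n..<?n+N. ?st i + ser (?T!i) - arr (?T!i))" .
  have "(\<Sum>i=?n..<?n+N. ?st i + ser (?T!i) - arr (?T!i)) \<le> real (card {?n..<?n+N}) * (real N * h)"
  proof (rule sum_bounded_above)
    fix i assume i: "i \<in> {?n..<?n+N}"
    then have "arr (?T!i) = a"
      by (auto simp: nth_append arr_def)
    moreover have "real (Suc (i - ?n)) * h \<le> real N * h"
      using i assms by (intro mult_right_mono) auto
    ultimately show "?st i + ser (?T!i) - arr (?T!i) \<le> real N * h"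
      using i burst_first_finish(2)[where i = i] by simp
  qed
  then show ?thesis
    unfolding split by simp
qed

lemma TRT_OPT_burst_first_bounds:
  assumes p: "1 \<le> p" and S: "valid_instance p S" and a: "0 \<le> a" and h: "0 < h"
    and burst_before_B: "a + real N * h \<le> B" and arr_le_B: "\<And>i. i < length S \<Longrightarrow> arr (S!i) \<le> B"
  shows "TRT_OPT p (S @ replicate N (h, h, a)) \<le>
      (\<Sum>i<length S. B + (\<Sum>k\<le>i. ser (S!k)) - arr (S!i)) + real N * (real N * h)"
    and "0 < N \<Longrightarrow> h / real p \<le> TRT_OPT p (S @ replicate N (h, h, a))"
proof -
  let ?T = "S @ replicate N (h, h, a)" and ?d = "serial_sched (burst_first S B h a)"
  have valid: "valid_instance p ?T"
    using valid_instance_append_replicate[OF S p a h] .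
  have feasible: "feasible_sched p ?T (\<lambda>i. np_par (?d i)) (np_alloc ?T ?d) (np_finish ?T ?d)"
    using feasible_np_imp_feasible_sched[OF valid feasible_np_burst_first[OF p S h burst_before_B]]
      arr_le_B by blast
  show "TRT_OPT p ?T \<le> (\<Sum>i<length S. B + (\<Sum>k\<le>i. ser (S!k)) - arr (S!i)) + real N * (real N * h)"
    using TRT_OPT_le[OF feasible] TRT_np_burst_first_le[of h S N a B] h
    unfolding TRT_np_def by linarith
  show "h / real p \<le> TRT_OPT p ?T" if "0 < N"
    using ser_div_le_TRT_OPT[OF feasible valid, of "length S"] that by (simp add: ser_def nth_append)
qed

lemma TRT_OPT_append_burst:
  assumes p: "1 \<le> p" and S: "valid_instance p S" and a: "0 \<le> a"
  obtains C where "\<And>N. 0 < N \<Longrightarrow>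
    0 < TRT_OPT p (S @ replicate N (1 / real N ^ 2, 1 / real N ^ 2, a)) \<and>
    TRT_OPT p (S @ replicate N (1 / real N ^ 2, 1 / real N ^ 2, a)) \<le> C"
proof -
  define B where "B = a + 1 + (\<Sum>i<length S. arr (S!i))"
  have arr_nonneg: "0 \<le> arr (S!i)" if "i < length S" for i
    using S that by (simp add: valid_instance_def valid_task_def)
  have "0 \<le> (\<Sum>i<length S. arr (S!i))"
    using arr_nonneg by (intro sum_nonneg) simp
  then have "a + 1 \<le> B"
    by (simp add: B_def)
  have arr_le_B: "arr (S!i) \<le> B" if "i < length S" for i
  proof -
    have "arr (S!i) \<le> (\<Sum>i<length S. arr (S!i))"
      using that arr_nonneg by (intro member_le_sum) auto
    then show ?thesis
      using a by (simp add: B_def)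
  qed
  show ?thesis
  proof (rule that)
    fix N :: nat
    assume "0 < N"
    define h where "h = 1 / real N ^ 2"
    have "0 < h" and "real N * (real N * h) = 1" and "real N * h \<le> 1"
      using \<open>0 < N\<close> by (simp_all add: h_def power2_eq_square)
    then have "a + real N * h \<le> B"
      using \<open>a + 1 \<le> B\<close> by linarith
    note bounds = TRT_OPT_burst_first_bounds[OF p S a \<open>0 < h\<close> this arr_le_B]
    have "0 < h / real p"
      using \<open>0 < h\<close> p by simp
    then show "0 < TRT_OPT p (S @ replicate N (1 / real N ^ 2, 1 / real N ^ 2, a)) \<and>
        TRT_OPT p (S @ replicate N (1 / real N ^ 2, 1 / real N ^ 2, a)) \<le>
        (\<Sum>i<length S. B + (\<Sum>k\<le>i. ser (S!k)) - arr (S!i)) + 1"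
      using bounds \<open>0 < N\<close> \<open>real N * (real N * h) = 1\<close> unfolding h_def by linarith
  qed
qed

theorem proposition9p2:
  fixes p :: nat and c :: real and ALG :: "task list \<Rightarrow> np_sched"
  assumes "p \<ge> 1" and "c > 0" and "online_np_scheduler p ALG"
  shows "\<exists>K>0. \<forall>R::nat. \<exists>T. valid_instance p T \<and> TRT_OPT p (scale c T) > 0 \<and>
            TRT_np T (ALG T) \<ge> K * real R * TRT_OPT p (scale c T)"
proof -
  obtain T0 a D where T0: "valid_instance p T0" and "0 \<le> a" "0 < D" and ALG: "\<And>N w. 0 < w \<Longrightarrow>
      real N * D \<le> TRT_np (T0 @ replicate N (w, w, a)) (ALG (T0 @ replicate N (w, w, a)))"
    using online_burst_cost[OF assms(1,3)] by blast
  obtain C where OPT: "\<And>N. 0 < N \<Longrightarrow>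
      0 < TRT_OPT p (scale c T0 @ replicate N (1 / real N ^ 2, 1 / real N ^ 2, a)) \<and>
      TRT_OPT p (scale c T0 @ replicate N (1 / real N ^ 2, 1 / real N ^ 2, a)) \<le> C"
    using TRT_OPT_append_burst[OF assms(1) valid_instance_scale[OF T0 assms(2)] \<open>0 \<le> a\<close>] by blast
  have "\<exists>T. valid_instance p T \<and> 0 < TRT_OPT p (scale c T) \<and>
      1 * real R * TRT_OPT p (scale c T) \<le> TRT_np T (ALG T)" for R :: nat
  proof -
    define N where "N = nat \<lceil>real R * C / D\<rceil> + 1"
    define w where "w = 1 / (c * real N ^ 2)"
    let ?T = "T0 @ replicate N (w, w, a)"
    have "0 < N" "0 < w"
      using assms(2) by (simp_all add: N_def w_def)
    have "real R * C / D \<le> real N"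
      unfolding N_def by linarith
    then have "real R * C \<le> real N * D"
      using \<open>0 < D\<close> by (simp add: divide_le_eq)
    moreover have "scale c ?T = scale c T0 @ replicate N (1 / real N ^ 2, 1 / real N ^ 2, a)"
      using assms(2) by (simp add: w_def scale_append scale_replicate)
    ultimately show ?thesis
      using valid_instance_append_replicate[OF T0 assms(1) \<open>0 \<le> a\<close> \<open>0 < w\<close>]
        OPT[OF \<open>0 < N\<close>] ALG[OF \<open>0 < w\<close>, of N] mult_left_mono[of _ C "real R"]
      by (smt (verit) of_nat_0_le_iff)
  qed
  then show ?thesis
    by (intro exI[of _ 1]) auto
qed

end
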